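(* Let $2\leq k<d$, $A\subset\mathbb{R}^d$, $0<r<\operatorname{reach}A$, $\theta>0$, and let $a,b\in T_k(A)$ be $(A,k,\theta)$-related. Then $$\rho_k(\psi_k^A(a),\psi_k^A(b))\leq L_{k,\theta,r}|b-a|,\qquad L_{k,\theta,r}=\frac{k}{(k!\,\theta)^2r}.$$
   Context: $\operatorname{reach}A=\inf_{a\in A}\sup\{r\geq0:$ every point of $B(a,r)$ has a unique nearest point in $A\}$. $\operatorname{Tan}(A,x)$ is the tangent cone ($u\in\operatorname{Tan}(A,x)$ iff $u=0$ or $r_i(x_i-x)\to u$ for some $x\neq x_i\in A$, $x_i\to x$, $r_i>0$), $\widetilde{\operatorname{Tan}}(A,x)=\operatorname{span}\operatorname{Tan}(A,x)$, $T_k(A)=\{x\in A:\dim\widetilde{\operatorname{Tan}}(A,x)=k\}$, $\psi_k^A(x)=\widetilde{\operatorname{Tan}}(A,x)\in G(d,k)$, and $\rho_k(U,V)=\max\big(\sup_{u\in U,|u|=1}\mathrm{dist}(u,V),\sup_{v\in V,|v|=1}\mathrm{dist}(v,U)\big)$. For $a_0,\dots,a_k\in\mathbb{R}^d$, $\sigma(a_0,\dots,a_k)=\operatorname{conv}\{a_0,\dots,a_k\}$, $|\sigma|$ is its $k$-dimensional volume and (if $\operatorname{diam}\sigma>0$) $\Theta(\sigma)=|\sigma|/(\operatorname{diam}\sigma)^k$ is its fullness. Points $a\neq b$ in $\mathbb{R}^d$ are $(A,k,\theta)$-related if there exist $z_1,\dots,z_{k-1}\in A$ with $\Theta(\sigma(a,b,z_1,\dots,z_{k-1}))\geq\theta$.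 *)

theory Defs
  imports "HOL-Analysis.Analysis"
begin

text \<open>Nearest point uniqueness and reach (as an extended real; reach of the empty set is +infinity).\<close>
definition unique_nearest :: "'a::euclidean_space set \<Rightarrow> 'a \<Rightarrow> bool" where
  "unique_nearest A x \<longleftrightarrow> (\<exists>!p. p \<in> A \<and> (\<forall>q\<in>A. dist x p \<le> dist x q))"

definition reach :: "'a::euclidean_space set \<Rightarrow> ereal" where
  "reach A = (INF a\<in>A. Sup {ereal r | r. r \<ge> 0 \<and> (\<forall>x\<in>ball a r. unique_nearest A x)})"

definition Tan :: "'a::euclidean_space set \<Rightarrow> 'a \<Rightarrow> 'a set" where
  "Tan A x = {u. u = 0 \<or> (\<exists>xs rs. (\<forall>i. xs i \<in> A \<and> xs i \<noteq> x \<and> rs i > (0::real))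
        \<and> xs \<longlonglongrightarrow> x \<and> (\<lambda>i. rs i *\<^sub>R (xs i - x)) \<longlonglongrightarrow> u)}"

definition Tan_span :: "'a::euclidean_space set \<Rightarrow> 'a \<Rightarrow> 'a set" where
  "Tan_span A x = span (Tan A x)"

definition T_k :: "nat \<Rightarrow> 'a::euclidean_space set \<Rightarrow> 'a set" where
  "T_k k A = {x \<in> A. dim (Tan_span A x) = k}"

definition psi :: "nat \<Rightarrow> 'a::euclidean_space set \<Rightarrow> 'a \<Rightarrow> 'a set" where
  "psi k A x = Tan_span A x"

definition rho :: "'a::euclidean_space set \<Rightarrow> 'a set \<Rightarrow> real" where
  "rho U V = max (SUP u\<in>{u\<in>U. norm u = 1}. infdist u V) (SUP v\<in>{v\<in>V. norm v = 1}. infdist v U)"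

definition detk :: "nat \<Rightarrow> (nat \<Rightarrow> nat \<Rightarrow> real) \<Rightarrow> real" where
  "detk k M = (\<Sum>p | p permutes {..<k}. of_int (sign p) * (\<Prod>i<k. M i (p i)))"

text \<open>k-dimensional volume of the simplex with vertices P 0, ..., P k (Gram determinant formula).\<close>
definition simplex_vol :: "nat \<Rightarrow> (nat \<Rightarrow> 'a::euclidean_space) \<Rightarrow> real" where
  "simplex_vol k P = sqrt (detk k (\<lambda>i j. (P (Suc i) - P 0) \<bullet> (P (Suc j) - P 0))) / fact k"

definition simplex_set :: "nat \<Rightarrow> (nat \<Rightarrow> 'a::euclidean_space) \<Rightarrow> 'a set" where
  "simplex_set k P = convex hull (P ` {..k})"

definition fullness :: "nat \<Rightarrow> (nat \<Rightarrow> 'a::euclidean_space) \<Rightarrow> real" where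
  "fullness k P = simplex_vol k P / (diameter (simplex_set k P)) ^ k"

definition verts :: "'a \<Rightarrow> 'a \<Rightarrow> (nat \<Rightarrow> 'a) \<Rightarrow> nat \<Rightarrow> 'a" where
  "verts a b z i = (if i = 0 then a else if i = 1 then b else z (i - 1))"

definition related :: "'a::euclidean_space set \<Rightarrow> nat \<Rightarrow> real \<Rightarrow> 'a \<Rightarrow> 'a \<Rightarrow> bool" where
  "related A k \<theta> a b \<longleftrightarrow> a \<noteq> b \<and>
     (\<exists>z. (\<forall>i\<in>{1..k-1}. z i \<in> A) \<and> fullness k (verts a b z) \<ge> \<theta>)"

end

theory Submission
  imports Defs "Jordan_Normal_Form.Determinant"
begin

(* Federer's normal-vector inequality for sets of positive reach: if 0 < r < reach A, a is in A and
   n is orthogonal to Tan A a, then |<w - a, n>| <= |w - a|^2 |n| / (2 r) for all w in A.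
   For the simplex a, b, z_1, ..., z_(k-1) of fullness at least theta and diameter D, the Gram
   determinant of the edges from a is at least (k! theta D^k)^2, so every edge has height at least
   k! theta D over the span of the others. Hence a vector p in the span P of the edges has
   coefficients at most |p| / (k! theta D), and the inequality bounds the component of p normal to
   Tan A a by k D |p| / (2 r k! theta); swapping a and b gives the same bound at b. As P and both
   tangent spaces are k-dimensional, these one-sided bounds can be reversed, so going through P gives
   rho <= k D / (r k! theta), while D <= |b - a| / (k! theta) since |b - a| is at least a height. *)

section \<open>Orthogonal projection onto a subspace\<close>

lemma power2_norm_diff:
  "(norm (a - b))\<^sup>2 = (norm a)\<^sup>2 - 2 * inner a b + (norm (b::'a::real_inner))\<^sup>2"
  by (simp add: power2_norm_eq_inner inner_diff_left inner_diff_right inner_commute)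

lemma infdist_subspace_eq_norm:
  fixes x y :: "'a::euclidean_space"
  assumes V: "subspace V" and y: "y \<in> V" and orth: "\<And>w. w \<in> V \<Longrightarrow> inner (x - y) w = 0"
  shows "infdist x V = norm (x - y)"
proof (rule antisym)
  show "infdist x V \<le> norm (x - y)"
    using infdist_le[OF y, of x] by (simp add: dist_norm)
  have "norm (x - y) \<le> dist x w" if w: "w \<in> V" for w
  proof -
    have "y - w \<in> V" using y w V by (simp add: subspace_diff)
    then have "(norm (x - w))\<^sup>2 = (norm (x - y))\<^sup>2 + (norm (y - w))\<^sup>2"
      using norm_add_Pythagorean[of "x - y" "y - w"] orth by (simp add: Linear_Algebra.orthogonal_def)
    then have "(norm (x - y))\<^sup>2 \<le> (norm (x - w))\<^sup>2" by simp
    then show ?thesis by (simp add: dist_norm power_mono_iff)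
  qed
  then show "norm (x - y) \<le> infdist x V"
    using y by (subst infdist_notempty) (auto intro: cINF_greatest)
qed

lemma subspace_orthogonal_projection_exists:
  fixes V :: "'a::euclidean_space set"
  assumes V: "subspace V"
  obtains \<pi> where "linear \<pi>" "\<And>x. \<pi> x \<in> V" "\<And>x w. w \<in> V \<Longrightarrow> inner (x - \<pi> x) w = 0"
proof -
  obtain B where BV: "B \<subseteq> V" and orth: "pairwise Linear_Algebra.orthogonal B" and unit: "\<And>x. x \<in> B \<Longrightarrow> norm x = 1"
    and indB: "independent B" and spB: "span B = V"
    using orthonormal_basis_subspace[OF V] by metis
  have fB: "finite B" using indB by (rule independent_imp_finite)
  define \<pi> where "\<pi> x = (\<Sum>b\<in>B. inner x b *\<^sub>R b)" for x
  have "linear \<pi>" unfolding \<pi>_def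
    by (intro linearI) (auto simp: inner_add_left scaleR_add_left sum.distrib scaleR_sum_right)
  moreover have "\<pi> x \<in> V" for x
    unfolding \<pi>_def using BV V by (intro subspace_sum subspace_mul) auto
  moreover have "inner (x - \<pi> x) w = 0" if w: "w \<in> V" for x w
  proof -
    have "inner (\<pi> x) b = inner x b" if b: "b \<in> B" for b
    proof -
      have "inner (\<pi> x) b = (\<Sum>b'\<in>B. if b' = b then inner x b else 0)"
        unfolding \<pi>_def inner_sum_left using orth unit b
        by (intro sum.cong) (auto simp: pairwise_def Linear_Algebra.orthogonal_def power2_norm_eq_inner[symmetric])
      then show ?thesis using fB b by simp
    qed
    then have "Linear_Algebra.orthogonal (x - \<pi> x) w"
      using w spB by (intro orthogonal_to_span[of w B]) (auto simp: Linear_Algebra.orthogonal_def inner_diff_left)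
    then show ?thesis by (simp add: Linear_Algebra.orthogonal_def)
  qed
  ultimately show ?thesis using that by blast
qed

lemma span_image_representation:
  fixes v :: "nat \<Rightarrow> 'a::euclidean_space"
  assumes "finite I" "y \<in> span (v ` I)"
  obtains c where "y = (\<Sum>j\<in>I. c j *\<^sub>R v j)"
  using assms
proof (induction I arbitrary: y thesis rule: finite_induct)
  case empty then show ?case by simp
next
  case (insert i I)
  obtain t where "y - t *\<^sub>R v i \<in> span (v ` I)"
    using insert.prems(2) span_breakdown_eq by (metis image_insert)
  then obtain c where c: "y - t *\<^sub>R v i = (\<Sum>j\<in>I. c j *\<^sub>R v j)"
    using insert.IH by blast
  have "(\<Sum>j\<in>I. (c(i := t)) j *\<^sub>R v j) = (\<Sum>j\<in>I. c j *\<^sub>R v j)"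
    using insert.hyps by (intro sum.cong) auto
  then have "y = (\<Sum>j\<in>insert i I. (c(i := t)) j *\<^sub>R v j)"
    using insert.hyps c by (simp add: algebra_simps)
  then show ?case by (rule insert.prems(1))
qed

section \<open>Gram determinants and heights\<close>

definition gram_matrix :: "nat \<Rightarrow> (nat \<Rightarrow> 'a::real_inner) \<Rightarrow> real Matrix.mat" where
  "gram_matrix k v = Matrix.mat k k (\<lambda>(i, j). inner (v i) (v j))"

definition gram_det :: "nat \<Rightarrow> (nat \<Rightarrow> 'a::real_inner) \<Rightarrow> real" where
  "gram_det k v = Determinant.det (gram_matrix k v)"

definition height :: "nat \<Rightarrow> (nat \<Rightarrow> 'a::real_normed_vector) \<Rightarrow> nat \<Rightarrow> real" where
  "height k v j = infdist (v j) (span (v ` ({..<k} - {j})))"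

lemma gram_matrix_carrier [simp]: "gram_matrix k v \<in> carrier_mat k k"
  unfolding gram_matrix_def by auto

lemma detk_inner_eq_gram_det: "detk k (\<lambda>i j. inner (v i) (v j)) = gram_det k v"
  unfolding detk_def gram_det_def gram_matrix_def Determinant.det_def by (auto simp: atLeast0LessThan)

lemma gram_det_linear_change:
  fixes v w :: "nat \<Rightarrow> 'a::real_inner"
  assumes M: "M \<in> carrier_mat k k"
    and w: "\<And>i. i < k \<Longrightarrow> w i = (\<Sum>j<k. (M $$ (i, j)) *\<^sub>R v j)"
  shows "gram_det k w = (Determinant.det M)\<^sup>2 * gram_det k v"
proof -
  have "gram_matrix k w = M * gram_matrix k v * transpose_mat M"
  proof (rule eq_matI)
    fix i l assume "i < dim_row (M * gram_matrix k v * transpose_mat M)"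
      and "l < dim_col (M * gram_matrix k v * transpose_mat M)"
    then have i: "i < k" and l: "l < k" using M by auto
    have "(M * gram_matrix k v * transpose_mat M) $$ (i, l)
        = (\<Sum>m<k. (\<Sum>j<k. M $$ (i, j) * inner (v j) (v m)) * M $$ (l, m))"
      using M i l by (simp add: scalar_prod_def gram_matrix_def atLeast0LessThan)
    also have "\<dots> = inner (\<Sum>j<k. (M $$ (i, j)) *\<^sub>R v j) (\<Sum>m<k. (M $$ (l, m)) *\<^sub>R v m)"
      by (simp add: inner_sum_left inner_sum_right sum_distrib_left sum_distrib_right mult_ac)
    finally show "gram_matrix k w $$ (i, l) = (M * gram_matrix k v * transpose_mat M) $$ (i, l)"
      using i l by (simp add: gram_matrix_def w)
  qed (use M in \<open>auto simp: gram_matrix_def\<close>)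
  then show ?thesis
    using M by (simp add: gram_det_def det_mult[of _ k] det_transpose power2_eq_square)
qed

lemma gram_det_permute:
  fixes v :: "nat \<Rightarrow> 'a::real_inner"
  assumes p: "p permutes {..<k}"
  shows "gram_det k (v \<circ> p) = gram_det k v"
proof -
  define M where "M = Matrix.mat k k (\<lambda>(i, j). if p i = j then (1::real) else 0)"
  have M: "M \<in> carrier_mat k k" by (simp add: M_def)
  have pk: "p i < k" if "i < k" for i using p that by (meson lessThan_iff permutes_in_image)
  have "(v \<circ> p) i = (\<Sum>j<k. (M $$ (i, j)) *\<^sub>R v j)" if i: "i < k" for i
  proof -
    have "(\<Sum>j<k. (M $$ (i, j)) *\<^sub>R v j) = (\<Sum>j<k. if p i = j then v j else 0)"
      using i by (intro sum.cong) (auto simp: M_def)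
    then show ?thesis using pk[OF i] by simp
  qed
  note change = gram_det_linear_change[OF M this]
  have MM: "M * transpose_mat M = 1\<^sub>m k"
  proof (rule eq_matI)
    fix i l assume "i < dim_row (1\<^sub>m k)" "l < dim_col (1\<^sub>m k)"
    then have i: "i < k" and l: "l < k" by auto
    have "(M * transpose_mat M) $$ (i, l) = (\<Sum>j<k. (if p i = j then 1 else 0) * (if p l = j then 1 else 0))"
      using i l M by (simp add: scalar_prod_def M_def atLeast0LessThan)
    also have "\<dots> = (\<Sum>j<k. if p i = j then (if p l = j then 1 else 0) else 0)"
      by (intro sum.cong) auto
    also have "\<dots> = (if i = l then 1 else 0)"
      using pk[OF i] p by (simp add: permutes_inj inj_eq)
    finally show "(M * transpose_mat M) $$ (i, l) = 1\<^sub>m k $$ (i, l)" using i l by simp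
  qed (use M in auto)
  have "Determinant.det M * Determinant.det M = 1"
    using arg_cong[OF MM, of Determinant.det] M by (simp add: det_mult[of _ k] det_transpose)
  then show ?thesis using change by (simp add: comp_def power2_eq_square)
qed

lemma gram_det_Suc_add_combination:
  fixes v :: "nat \<Rightarrow> 'a::real_inner"
  shows "gram_det (Suc m) (v(m := v m + (\<Sum>j<m. c j *\<^sub>R v j))) = gram_det (Suc m) v"
proof -
  define M where "M = Matrix.mat (Suc m) (Suc m)
      (\<lambda>(i, j). if i = j then 1 else if i = m \<and> j < m then c j else (0::real))"
  have M: "M \<in> carrier_mat (Suc m) (Suc m)" by (simp add: M_def)
  have "(v(m := v m + (\<Sum>j<m. c j *\<^sub>R v j))) i = (\<Sum>j<Suc m. (M $$ (i, j)) *\<^sub>R v j)"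
    if i: "i < Suc m" for i
  proof (cases "i = m")
    case True
    have "(\<Sum>j<m. (M $$ (i, j)) *\<^sub>R v j) = (\<Sum>j<m. c j *\<^sub>R v j)"
      using True by (intro sum.cong) (auto simp: M_def)
    then show ?thesis using True by (simp add: M_def)
  next
    case False
    then have "(\<Sum>j<Suc m. (M $$ (i, j)) *\<^sub>R v j) = (\<Sum>j<Suc m. if i = j then v j else 0)"
      using i by (intro sum.cong) (auto simp: M_def)
    then show ?thesis using False i by simp
  qed
  note change = gram_det_linear_change[OF M this]
  have "Determinant.det M = prod_list (diag_mat M)"
    by (rule det_lower_triangular[OF _ M]) (auto simp: M_def)
  also have "\<dots> = 1" by (simp add: prod_list_diag_prod M_def)
  finally show ?thesis using change by (simp add: fun_upd_def)
qed

lemma gram_det_Suc_orthogonal: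
  fixes v :: "nat \<Rightarrow> 'a::real_inner"
  assumes orth: "\<And>j. j < m \<Longrightarrow> inner (v j) (v m) = 0"
  shows "gram_det (Suc m) v = gram_det m v * (norm (v m))\<^sup>2"
proof -
  have "gram_det (Suc m) v
      = (\<Sum>j<Suc m. gram_matrix (Suc m) v $$ (m, j) * cofactor (gram_matrix (Suc m) v) m j)"
    unfolding gram_det_def by (rule laplace_expansion_row) auto
  also have "\<dots> = gram_matrix (Suc m) v $$ (m, m) * cofactor (gram_matrix (Suc m) v) m m"
  proof -
    have "gram_matrix (Suc m) v $$ (m, j) = 0" if "j < m" for j
      using orth[OF that] that by (simp add: gram_matrix_def inner_commute)
    then show ?thesis by (simp add: lessThan_Suc)
  qed
  also have "cofactor (gram_matrix (Suc m) v) m m = gram_det m v"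
  proof -
    have "mat_delete (gram_matrix (Suc m) v) m m = gram_matrix m v"
      by (rule eq_matI) (auto simp: mat_delete_def gram_matrix_def)
    then show ?thesis by (simp add: cofactor_def gram_det_def)
  qed
  finally show ?thesis by (simp add: gram_matrix_def power2_norm_eq_inner)
qed

text \<open>Base times height: subtracting from the last vector its projection onto the span of the
  others changes neither the Gram determinant nor the other vectors.\<close>
lemma gram_det_Suc:
  fixes v :: "nat \<Rightarrow> 'a::euclidean_space"
  shows "gram_det (Suc m) v = gram_det m v * (height (Suc m) v m)\<^sup>2"
proof -
  define S where "S = span (v ` {..<m})"
  obtain \<pi> where "linear \<pi>" and \<pi>S: "\<And>x. \<pi> x \<in> S"
    and orth: "\<And>x w. w \<in> S \<Longrightarrow> inner (x - \<pi> x) w = 0"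
    using subspace_orthogonal_projection_exists[of S] unfolding S_def by blast
  define z where "z = v m - \<pi> (v m)"
  have "{..<Suc m} - {m} = {..<m}" by auto
  then have "height (Suc m) v m = infdist (v m) S" by (simp add: height_def S_def)
  also have "\<dots> = norm z"
    unfolding z_def by (rule infdist_subspace_eq_norm[OF _ \<pi>S orth]) (simp add: S_def)
  finally have height: "height (Suc m) v m = norm z" .
  obtain c where "\<pi> (v m) = (\<Sum>j<m. c j *\<^sub>R v j)"
    using span_image_representation[of "{..<m}" "\<pi> (v m)" v] \<pi>S S_def by auto
  then have "z = v m + (\<Sum>j<m. (- c j) *\<^sub>R v j)" by (simp add: z_def sum_negf)
  then have "gram_det (Suc m) v = gram_det (Suc m) (v(m := z))"
    using gram_det_Suc_add_combination[of m v "\<lambda>j. - c j"] by simp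
  also have "\<dots> = gram_det m (v(m := z)) * (norm z)\<^sup>2"
  proof (subst gram_det_Suc_orthogonal)
    show "inner ((v(m := z)) j) ((v(m := z)) m) = 0" if "j < m" for j
      using orth[of "v j" "v m"] that by (simp add: z_def S_def span_base inner_commute)
  qed simp
  moreover have "gram_matrix m (v(m := z)) = gram_matrix m v"
    by (rule eq_matI) (auto simp: gram_matrix_def)
  ultimately show ?thesis using height by (simp add: gram_det_def)
qed

lemma height_le_norm: "height k v j \<le> norm (v j)"
  using infdist_le[OF span_zero, of "v j"] by (simp add: height_def)

lemma gram_det_nonneg: "0 \<le> gram_det k (v :: nat \<Rightarrow> 'a::euclidean_space)"
proof (induction k)
  case 0 then show ?case by (simp add: gram_det_def gram_matrix_def)
next
  case (Suc m) then show ?case by (simp add: gram_det_Suc)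
qed

lemma gram_det_le_prod_norm:
  fixes v :: "nat \<Rightarrow> 'a::euclidean_space"
  shows "gram_det k v \<le> (\<Prod>j<k. (norm (v j))\<^sup>2)"
proof (induction k)
  case 0 then show ?case by (simp add: gram_det_def gram_matrix_def)
next
  case (Suc m)
  have "(height (Suc m) v m)\<^sup>2 \<le> (norm (v m))\<^sup>2"
    by (intro power_mono height_le_norm) (simp add: height_def infdist_nonneg)
  then have "gram_det m v * (height (Suc m) v m)\<^sup>2 \<le> (\<Prod>j<m. (norm (v j))\<^sup>2) * (norm (v m))\<^sup>2"
    using Suc.IH gram_det_nonneg[of m v] by (intro mult_mono) auto
  then show ?case by (simp add: gram_det_Suc)
qed

lemma gram_det_le_height:
  fixes v :: "nat \<Rightarrow> 'a::euclidean_space"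
  assumes i: "i < Suc m" and D: "\<And>j. j < Suc m \<Longrightarrow> norm (v j) \<le> D"
  shows "gram_det (Suc m) v \<le> (height (Suc m) v i)\<^sup>2 * (D\<^sup>2) ^ m"
proof -
  define p where "p = Transposition.transpose i m"
  have p: "p permutes {..<Suc m}" unfolding p_def using i by (intro permutes_swap_id) auto
  have img: "p ` {..<m} = {..<Suc m} - {i}"
  proof -
    have "p ` ({..<Suc m} - {m}) = p ` {..<Suc m} - {p m}"
      by (simp add: image_set_diff permutes_inj[OF p])
    also have "\<dots> = {..<Suc m} - {i}" using p by (simp add: permutes_image p_def)
    finally show ?thesis by (simp add: lessThan_Suc)
  qed
  have "{..<Suc m} - {m} = {..<m}" by auto
  then have "(v \<circ> p) ` ({..<Suc m} - {m}) = v ` ({..<Suc m} - {i})"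
    by (metis image_comp img)
  moreover have "(v \<circ> p) m = v i" by (simp add: p_def)
  ultimately have "height (Suc m) (v \<circ> p) m = height (Suc m) v i"
    by (simp add: height_def)
  then have "gram_det (Suc m) v = gram_det m (v \<circ> p) * (height (Suc m) v i)\<^sup>2"
    using gram_det_permute[OF p, of v] gram_det_Suc[of m "v \<circ> p"] by simp
  also have "\<dots> \<le> (D\<^sup>2) ^ m * (height (Suc m) v i)\<^sup>2"
  proof (rule mult_right_mono)
    have "p j < Suc m" if "j < m" for j
      using p that by (meson lessThan_iff less_SucI permutes_in_image)
    then have "(\<Prod>j<m. (norm ((v \<circ> p) j))\<^sup>2) \<le> (\<Prod>j<m. D\<^sup>2)"
      by (intro prod_mono) (auto intro!: power_mono D)
    then show "gram_det m (v \<circ> p) \<le> (D\<^sup>2) ^ m"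
      using gram_det_le_prod_norm[of m "v \<circ> p"] by simp
  qed simp
  finally show ?thesis by (simp add: mult.commute)
qed

lemma height_ge_of_gram_det_ge:
  fixes v :: "nat \<Rightarrow> 'a::euclidean_space"
  assumes D: "\<And>j. j < k \<Longrightarrow> norm (v j) \<le> D" "0 < D" and c: "0 \<le> c"
    and G: "(c * D ^ k)\<^sup>2 \<le> gram_det k v" and j: "j < k"
  shows "c * D \<le> height k v j"
proof -
  obtain m where k: "k = Suc m" using j by (cases k) auto
  define h where "h = height k v j"
  have "h \<ge> 0" by (simp add: h_def height_def infdist_nonneg)
  have "(c * D ^ k)\<^sup>2 \<le> h\<^sup>2 * (D\<^sup>2) ^ m"
    using G gram_det_le_height[of j m v D] D(1) j unfolding h_def k by auto
  also have "\<dots> = (h * D ^ m)\<^sup>2" by (simp add: power_mult_distrib power_mult[symmetric] mult.commute)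
  finally have "(c * D ^ k)\<^sup>2 \<le> (h * D ^ m)\<^sup>2" .
  then have "c * D ^ k \<le> h * D ^ m"
    by (rule power2_le_imp_le) (use \<open>h \<ge> 0\<close> D(2) in simp)
  then have "(c * D) * D ^ m \<le> h * D ^ m" by (simp add: k mult_ac)
  then show ?thesis using D(2) by (simp add: h_def)
qed

lemma coeff_times_height_le_norm:
  fixes v :: "nat \<Rightarrow> 'a::euclidean_space"
  assumes j: "j < k"
  shows "\<bar>c j\<bar> * height k v j \<le> norm (\<Sum>l<k. c l *\<^sub>R v l)"
proof (cases "c j = 0")
  case True then show ?thesis by simp
next
  case False
  define y where "y = - (1 / c j) *\<^sub>R (\<Sum>l\<in>{..<k} - {j}. c l *\<^sub>R v l)"
  have y: "y \<in> span (v ` ({..<k} - {j}))"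
    unfolding y_def by (intro span_mul span_sum span_base) auto
  have "(\<Sum>l<k. c l *\<^sub>R v l) = c j *\<^sub>R v j + (\<Sum>l\<in>{..<k} - {j}. c l *\<^sub>R v l)"
    using j by (simp add: sum.remove)
  then have "v j - y = (1 / c j) *\<^sub>R (\<Sum>l<k. c l *\<^sub>R v l)"
    using False by (simp add: y_def algebra_simps)
  then have "height k v j \<le> norm (\<Sum>l<k. c l *\<^sub>R v l) / \<bar>c j\<bar>"
    using infdist_le[OF y, of "v j"] by (simp add: height_def dist_norm)
  then show ?thesis using False by (simp add: field_simps)
qed

lemma dim_span_of_positive_heights:
  fixes v :: "nat \<Rightarrow> 'a::euclidean_space"
  assumes h: "\<And>j. j < k \<Longrightarrow> 0 < height k v j"
  shows "dim (span (v ` {..<k})) = k"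
proof -
  have inj: "inj_on v {..<k}"
  proof (rule inj_onI, rule ccontr)
    fix i j assume i: "i \<in> {..<k}" and j: "j \<in> {..<k}" and "v i = v j" "i \<noteq> j"
    then have "v i \<in> span (v ` ({..<k} - {i}))" by (intro span_base) auto
    then show False using h[of i] i by (simp add: height_def)
  qed
  have "independent (v ` {..<k})"
    unfolding independent_explicit
  proof (intro conjI allI impI ballI)
    fix c x assume c0: "(\<Sum>x\<in>v ` {..<k}. c x *\<^sub>R x) = 0" and "x \<in> v ` {..<k}"
    then obtain j where j: "j < k" and x: "x = v j" by blast
    have "(\<Sum>l<k. c (v l) *\<^sub>R v l) = 0" using c0 by (simp add: sum.reindex[OF inj])
    then have "\<bar>c (v j)\<bar> * height k v j \<le> 0"
      using coeff_times_height_le_norm[OF j, of "c \<circ> v" v] by simp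
    then show "c x = 0" using h[OF j] x by (simp add: mult_le_0_iff)
  qed simp
  then show ?thesis using inj by (simp add: dim_span dim_eq_card_independent card_image)
qed

text \<open>The height bound controls the coefficients of \<open>p\<close> in the basis \<open>v\<close>, hence \<open>inner p z\<close>.\<close>
lemma norm_le_of_inner_span_bound:
  fixes v :: "nat \<Rightarrow> 'a::euclidean_space"
  assumes p: "p \<in> span (v ` {..<k})" and pz: "inner p z = (norm z)\<^sup>2"
    and h: "0 < h" "\<And>l. l < k \<Longrightarrow> h \<le> height k v l"
    and B: "0 \<le> B" "\<And>l. l < k \<Longrightarrow> \<bar>inner (v l) z\<bar> \<le> B * norm z"
  shows "norm z \<le> real k * B / h * norm p"
proof -
  obtain c where c: "p = (\<Sum>l<k. c l *\<^sub>R v l)" using span_image_representation[OF _ p] by blast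
  have "(norm z)\<^sup>2 = (\<Sum>l<k. c l * inner (v l) z)" using pz by (simp add: c inner_sum_left)
  also have "\<dots> \<le> (\<Sum>l<k. norm p / h * (B * norm z))"
  proof (rule sum_mono)
    fix l assume "l \<in> {..<k}"
    then have l: "l < k" by simp
    have "\<bar>c l\<bar> * h \<le> \<bar>c l\<bar> * height k v l" by (rule mult_left_mono[OF h(2)[OF l]]) simp
    also have "\<dots> \<le> norm p" unfolding c by (rule coeff_times_height_le_norm[OF l])
    finally have "\<bar>c l\<bar> \<le> norm p / h" using h(1) by (simp add: field_simps)
    then have "\<bar>c l * inner (v l) z\<bar> \<le> norm p / h * (B * norm z)"
      unfolding abs_mult using B(2)[OF l] h(1) by (intro mult_mono) auto
    then show "c l * inner (v l) z \<le> norm p / h * (B * norm z)" by linarith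
  qed
  also have "\<dots> = (real k * B / h * norm p) * norm z" by simp
  finally have "norm z * norm z \<le> (real k * B / h * norm p) * norm z" by (simp add: power2_eq_square)
  moreover have "0 \<le> real k * B / h * norm p" using B h by simp
  ultimately show ?thesis by (cases "z = 0") (auto intro: mult_right_le_imp_le[of _ "norm z"])
qed

section \<open>Relative closeness of subspaces\<close>

definition near :: "real \<Rightarrow> 'a::real_normed_vector set \<Rightarrow> 'a set \<Rightarrow> bool" where
  "near \<delta> U V \<longleftrightarrow> (\<forall>u\<in>U. infdist u V \<le> \<delta> * norm u)"

lemma near_antimono: "near \<delta> U V \<Longrightarrow> U' \<subseteq> U \<Longrightarrow> \<delta> \<le> \<delta>' \<Longrightarrow> near \<delta>' U' V"
  unfolding near_def by (meson order_trans mult_right_mono norm_ge_zero subsetD)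

lemma near_one: "subspace V \<Longrightarrow> near 1 U V"
  unfolding near_def using infdist_le[of 0 V] by (simp add: subspace_0)

lemma infdist_span_le_of_orthogonal:
  fixes u v :: "'a::euclidean_space"
  assumes orth: "inner (u - v) v = 0" and uv: "norm (u - v) \<le> \<delta> * norm u" and \<delta>: "0 \<le> \<delta>"
  shows "infdist v (span {u}) \<le> \<delta> * norm v"
proof (cases "v = 0")
  case True then show ?thesis by (simp add: span_zero)
next
  case False
  have Pythagoras: "(norm u)\<^sup>2 = (norm v)\<^sup>2 + (norm (u - v))\<^sup>2"
    using norm_add_Pythagorean[of v "u - v"] orth
    by (simp add: Linear_Algebra.orthogonal_def inner_commute)
  then have "norm v \<le> norm u" by (simp add: power2_le_imp_le)
  moreover have "0 < norm v" using False by simp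
  ultimately have u: "norm u > 0" by linarith
  have "(norm (u - v))\<^sup>2 \<le> (\<delta> * norm u)\<^sup>2" using uv by (simp add: power_mono)
  then have "(1 - \<delta>\<^sup>2) * (norm u)\<^sup>2 \<le> (norm v)\<^sup>2"
    using Pythagoras by (simp add: power_mult_distrib algebra_simps)
  then have lb: "1 - \<delta>\<^sup>2 \<le> (norm v)\<^sup>2 / (norm u)\<^sup>2"
    using u by (simp add: field_simps)
  have uv_inner: "inner u v = (norm v)\<^sup>2" using orth by (simp add: inner_diff_left power2_norm_eq_inner)
  define \<alpha> where "\<alpha> = (norm v)\<^sup>2 / (norm u)\<^sup>2"
  have "(norm (v - \<alpha> *\<^sub>R u))\<^sup>2 = (norm v)\<^sup>2 - (norm v)\<^sup>2 * ((norm v)\<^sup>2 / (norm u)\<^sup>2)"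
    unfolding power2_norm_diff using u uv_inner
    by (simp add: \<alpha>_def inner_commute field_simps power2_eq_square)
  also have "\<dots> \<le> (norm v)\<^sup>2 - (norm v)\<^sup>2 * (1 - \<delta>\<^sup>2)"
    using mult_left_mono[OF lb, of "(norm v)\<^sup>2"] by simp
  also have "\<dots> = (\<delta> * norm v)\<^sup>2" by (simp add: power_mult_distrib algebra_simps)
  finally have "norm (v - \<alpha> *\<^sub>R u) \<le> \<delta> * norm v"
    using \<delta> by (simp add: power_mono_iff)
  moreover have "\<alpha> *\<^sub>R u \<in> span {u}" by (simp add: span_base span_mul)
  ultimately show ?thesis using infdist_le[of "\<alpha> *\<^sub>R u" "span {u}" v] by (simp add: dist_norm)
qed

text \<open>The orthogonal projection onto \<open>V\<close> is injective on \<open>U\<close> because \<open>\<delta> < 1\<close>, hence onto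
  \<open>V\<close> by the dimension assumption; so every \<open>v \<in> V\<close> is the projection of some \<open>u \<in> U\<close>.\<close>
lemma near_sym:
  fixes U V :: "'a::euclidean_space set"
  assumes U: "subspace U" and V: "subspace V" and dim: "dim V \<le> dim U"
    and \<delta>: "0 \<le> \<delta>" "\<delta> < 1" and near: "near \<delta> U V"
  shows "near \<delta> V U"
  unfolding near_def
proof
  fix v assume v: "v \<in> V"
  obtain \<pi> where lin: "linear \<pi>" and \<pi>V: "\<And>x. \<pi> x \<in> V"
    and orth: "\<And>x w. w \<in> V \<Longrightarrow> inner (x - \<pi> x) w = 0"
    using subspace_orthogonal_projection_exists[OF V] by blast
  have close: "norm (u - \<pi> u) \<le> \<delta> * norm u" if "u \<in> U" for u
    using near that infdist_subspace_eq_norm[OF V \<pi>V orth] by (simp add: near_def)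
  have "u = 0" if "u \<in> U" "\<pi> u = 0" for u
    using close[OF that(1)] that(2) \<delta>
    by (metis diff_zero mult_le_cancel_right1 norm_ge_zero norm_le_zero_iff not_le)
  then have "inj_on \<pi> U" using linear_inj_on_iff_eq_0[OF lin U] by blast
  moreover have "span U = U" using U by (simp add: span_eq_iff)
  ultimately have "dim (\<pi> ` U) = dim U"
    using dim_image_eq[OF lin, of U] by metis
  then have "\<pi> ` U = V"
    using dim \<pi>V by (intro subspace_dim_equal linear_subspace_image[OF lin U] V) auto
  then obtain u where u: "u \<in> U" and vu: "v = \<pi> u" using v by blast
  have "span {u} \<subseteq> U" using u U by (simp add: span_minimal)
  then have "infdist v U \<le> infdist v (span {u})"
    using span_zero by (intro infdist_mono) blast+
  also have "\<dots> \<le> \<delta> * norm v"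
    using orth[OF v, of u] close[OF u] \<delta> vu by (intro infdist_span_le_of_orthogonal) auto
  finally show "infdist v U \<le> \<delta> * norm v" .
qed

lemma near_trans:
  fixes T P T' :: "'a::euclidean_space set"
  assumes P: "subspace P" and TP: "near \<delta> T P" and PT': "near \<epsilon> P T'" and \<epsilon>: "0 \<le> \<epsilon>"
  shows "near (\<delta> + \<epsilon>) T T'"
  unfolding near_def
proof
  fix t assume t: "t \<in> T"
  obtain \<pi> where "linear \<pi>" and \<pi>P: "\<And>x. \<pi> x \<in> P"
    and orth: "\<And>x w. w \<in> P \<Longrightarrow> inner (x - \<pi> x) w = 0"
    using subspace_orthogonal_projection_exists[OF P] by blast
  define p where "p = \<pi> t"
  have "(norm t)\<^sup>2 = (norm p)\<^sup>2 + (norm (t - p))\<^sup>2"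
    using norm_add_Pythagorean[of p "t - p"] orth[OF \<pi>P[of t], of t]
    by (simp add: Linear_Algebra.orthogonal_def inner_commute p_def)
  then have "norm p \<le> norm t" by (simp add: power2_le_imp_le)
  have "infdist t T' \<le> infdist p T' + dist t p" by (rule infdist_triangle)
  also have "\<dots> \<le> \<epsilon> * norm p + \<delta> * norm t"
    using PT' \<pi>P[of t] TP t infdist_subspace_eq_norm[OF P \<pi>P orth, of t]
    by (intro add_mono) (auto simp: near_def p_def dist_norm)
  also have "\<dots> \<le> (\<delta> + \<epsilon>) * norm t"
    using \<open>norm p \<le> norm t\<close> \<epsilon> by (simp add: distrib_right mult_left_mono)
  finally show "infdist t T' \<le> (\<delta> + \<epsilon>) * norm t" .
qed

lemma rho_le_of_near:
  assumes "\<exists>u\<in>U. norm u = 1" "\<exists>v\<in>V. norm v = 1" "near M U V" "near M V U"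
  shows "rho U V \<le> M"
  unfolding rho_def by (intro max.boundedI cSUP_least) (use assms in \<open>auto simp: near_def\<close>)

lemma rho_le_via_common_subspace:
  fixes U V P :: "'a::euclidean_space set"
  assumes subspaces: "subspace U" "subspace V" "subspace P"
    and dims: "dim U = k" "dim V = k" "dim P = k" "0 < k"
    and near: "near \<epsilon> P U" "near \<epsilon> P V" and \<epsilon>: "0 \<le> \<epsilon>"
  shows "rho U V \<le> 2 * \<epsilon>"
proof -
  have unit: "\<exists>u\<in>W. norm u = 1" if "subspace W" "dim W = k" for W :: "'a set"
  proof -
    have "\<not> W \<subseteq> {0}" using that dims(4) dim_eq_0[of W] by simp
    then obtain x where x: "x \<in> W" "x \<noteq> 0" by blast
    then have "sgn x \<in> W" using that(1) by (simp add: sgn_div_norm subspace_mul)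
    then show ?thesis using x by (intro bexI[of _ "sgn x"]) (auto simp: norm_sgn)
  qed
  have "near (2 * \<epsilon>) U V \<and> near (2 * \<epsilon>) V U"
  proof (cases "\<epsilon> < 1")
    case True
    have UP: "near \<epsilon> U P"
      by (rule near_sym[OF subspaces(3) subspaces(1) _ \<epsilon> True near(1)]) (simp add: dims)
    have VP: "near \<epsilon> V P"
      by (rule near_sym[OF subspaces(3) subspaces(2) _ \<epsilon> True near(2)]) (simp add: dims)
    have "near (\<epsilon> + \<epsilon>) U V" by (rule near_trans[OF subspaces(3) UP near(2) \<epsilon>])
    moreover have "near (\<epsilon> + \<epsilon>) V U" by (rule near_trans[OF subspaces(3) VP near(1) \<epsilon>])
    ultimately show ?thesis by (metis mult_2)
  next
    case False
    then have "1 \<le> 2 * \<epsilon>" by simp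
    then show ?thesis
      using near_antimono[OF near_one[OF subspaces(2)] order_refl] near_antimono[OF near_one[OF subspaces(1)] order_refl]
      by blast
  qed
  then show ?thesis
    using rho_le_of_near[OF unit[OF subspaces(1) dims(1)] unit[OF subspaces(2) dims(2)]] by blast
qed

section \<open>Tangent cones\<close>

lemma not_tendsto_imp_subseq_far:
  fixes X :: "nat \<Rightarrow> 'b::metric_space"
  assumes "\<not> X \<longlonglongrightarrow> L"
  obtains e and \<phi> :: "nat \<Rightarrow> nat" where "e > 0" "strict_mono \<phi>" "\<And>j. e \<le> dist (X (\<phi> j)) L"
proof -
  obtain e where e: "e > 0" and "\<not> eventually (\<lambda>n. dist (X n) L < e) sequentially"
    using assms unfolding tendsto_iff by blast
  then have "\<forall>N. \<exists>n\<ge>N. \<not> dist (X n) L < e"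
    by (simp add: not_eventually frequently_sequentially)
  then have "infinite {n. e \<le> dist (X n) L}"
    by (simp add: infinite_nat_iff_unbounded_le not_less)
  then obtain \<phi> :: "nat \<Rightarrow> nat" where "strict_mono \<phi>" "\<And>j. \<phi> j \<in> {n. e \<le> dist (X n) L}"
    using infinite_enumerate by blast
  then show ?thesis using e that by auto
qed

lemma Tan_limit_of_directions:
  fixes a :: "'a::euclidean_space"
  assumes qA: "\<And>j. q j \<in> A" and qa: "\<And>j. q j \<noteq> a" and lim: "q \<longlonglongrightarrow> a"
  obtains t \<phi> where "t \<in> Tan A a" "strict_mono \<phi>" "(\<lambda>j. sgn (q (\<phi> j) - a)) \<longlonglongrightarrow> t"
proof -
  have "sgn (q j - a) \<in> sphere 0 1" for j using qa[of j] by (simp add: norm_sgn)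
  then obtain t \<phi> where \<phi>: "strict_mono \<phi>" and tlim: "((\<lambda>j. sgn (q j - a)) \<circ> \<phi>) \<longlonglongrightarrow> t"
    using compact_imp_seq_compact[OF compact_sphere] unfolding seq_compact_def by metis
  have "t \<in> Tan A a"
    unfolding Tan_def
  proof (intro CollectI disjI2 exI conjI allI)
    fix i
    show "q (\<phi> i) \<in> A" "q (\<phi> i) \<noteq> a" "1 / norm (q (\<phi> i) - a) > 0"
      using qA qa by auto
  next
    show "(\<lambda>i. q (\<phi> i)) \<longlonglongrightarrow> a" using LIMSEQ_subseq_LIMSEQ[OF lim \<phi>] by (simp add: comp_def)
    show "(\<lambda>i. (1 / norm (q (\<phi> i) - a)) *\<^sub>R (q (\<phi> i) - a)) \<longlonglongrightarrow> t"
      using tlim by (simp add: comp_def sgn_div_norm divide_inverse)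
  qed
  then show ?thesis using that \<phi> tlim by (simp add: comp_def)
qed

lemma inner_sgn_right: "inner m (sgn v) = inner m v / norm (v::'a::real_inner)"
  by (simp add: sgn_div_norm divide_inverse mult.commute)

text \<open>Hypothesis \<open>close\<close> says that \<open>q j\<close> lies in the closed ball of radius \<open>s j * norm m\<close> around
  \<open>a + s j *\<^sub>R m\<close>. If \<open>m\<close> is in the dual cone of \<open>Tan A a\<close>, such points approach \<open>a\<close> faster
  than \<open>s j\<close>: otherwise a limit direction of \<open>q j - a\<close> would be a tangent vector with positive
  inner product with \<open>m\<close>.\<close>
lemma dual_Tan_displacements_vanish:
  fixes a m :: "'a::euclidean_space"
  assumes dual: "\<And>t. t \<in> Tan A a \<Longrightarrow> inner m t \<le> 0"
    and qA: "\<And>j. q j \<in> A" and s: "\<And>j. s j > 0" "s \<longlonglongrightarrow> 0"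
    and close: "\<And>j. (norm (q j - a))\<^sup>2 \<le> 2 * s j * inner m (q j - a)"
  shows "(\<lambda>j. (1 / s j) *\<^sub>R (q j - a)) \<longlonglongrightarrow> 0"
proof (rule ccontr)
  assume "\<not> (\<lambda>j. (1 / s j) *\<^sub>R (q j - a)) \<longlonglongrightarrow> 0"
  then obtain \<epsilon> and \<phi> :: "nat \<Rightarrow> nat" where \<epsilon>: "\<epsilon> > 0" and \<phi>: "strict_mono \<phi>"
    and far: "\<And>j. \<epsilon> \<le> dist ((1 / s (\<phi> j)) *\<^sub>R (q (\<phi> j) - a)) 0"
    by (rule not_tendsto_imp_subseq_far) auto
  have far': "\<epsilon> * s (\<phi> j) \<le> norm (q (\<phi> j) - a)" for j
    using far[of j] s(1)[of "\<phi> j"] unfolding dist_norm diff_zero norm_scaleR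
    by (simp add: field_simps)
  then have qa: "q (\<phi> j) \<noteq> a" for j
    using \<epsilon> s(1)[of "\<phi> j"] by (metis mult_pos_pos norm_zero not_le right_minus_eq)
  have bound: "norm (q j - a) \<le> 2 * s j * norm m" for j
  proof -
    have "2 * s j * inner m (q j - a) \<le> 2 * s j * (norm m * norm (q j - a))"
      using s(1)[of j] by (intro mult_left_mono norm_cauchy_schwarz) auto
    then have "norm (q j - a) * norm (q j - a) \<le> (2 * s j * norm m) * norm (q j - a)"
      using close[of j] by (simp add: power2_eq_square mult_ac)
    then show ?thesis using s(1)[of j] by (cases "q j = a") (auto simp: mult_le_cancel_right)
  qed
  have lim: "(\<lambda>j. 2 * s j * norm m) \<longlonglongrightarrow> 0"
    by (intro tendsto_mult_left_zero tendsto_mult_right_zero s(2))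
  have "(\<lambda>j. q j - a) \<longlonglongrightarrow> 0"
    by (rule Lim_null_comparison[OF always_eventually lim]) (use bound in blast)
  then have "q \<longlonglongrightarrow> a" by (simp add: LIM_zero_iff)
  then have "(\<lambda>j. q (\<phi> j)) \<longlonglongrightarrow> a" using LIMSEQ_subseq_LIMSEQ[OF _ \<phi>] unfolding comp_def by blast
  then obtain t \<psi> where t: "t \<in> Tan A a" and \<psi>: "strict_mono \<psi>"
    and tlim: "(\<lambda>j. sgn (q (\<phi> (\<psi> j)) - a)) \<longlonglongrightarrow> t"
    using Tan_limit_of_directions[of "\<lambda>j. q (\<phi> j)" A a] qA qa by blast
  have "\<epsilon> / 2 \<le> inner m (sgn (q (\<phi> j) - a))" for j
  proof -
    have n: "norm (q (\<phi> j) - a) > 0" using qa[of j] by simp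
    have "\<epsilon> / 2 \<le> norm (q (\<phi> j) - a) / (2 * s (\<phi> j))"
      using far'[of j] s(1)[of "\<phi> j"] by (simp add: field_simps)
    also have "\<dots> \<le> inner m (q (\<phi> j) - a) / norm (q (\<phi> j) - a)"
      using close[of "\<phi> j"] n s(1)[of "\<phi> j"] by (simp add: field_simps power2_eq_square)
    finally show ?thesis by (simp add: inner_sgn_right)
  qed
  then have "\<epsilon> / 2 \<le> inner m t"
    by (intro LIMSEQ_le_const[OF tendsto_inner[OF tendsto_const tlim]]) auto
  then show False using dual[OF t] \<epsilon> by simp
qed

section \<open>Sets of positive reach\<close>

locale positive_reach =
  fixes A :: "'a::euclidean_space set" and R :: real
  assumes R_pos: "0 < R"
    and unique_nearest_near: "\<And>a x. a \<in> A \<Longrightarrow> dist a x < R \<Longrightarrow> unique_nearest A x"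
begin

definition nbhd :: "'a set" where
  "nbhd = {x. \<exists>a\<in>A. dist a x < R}"

definition nearest :: "'a \<Rightarrow> 'a" where
  "nearest x = (THE p. p \<in> A \<and> (\<forall>q\<in>A. dist x p \<le> dist x q))"

lemma nbhdI: "a \<in> A \<Longrightarrow> dist a x < R \<Longrightarrow> x \<in> nbhd"
  unfolding nbhd_def by blast

lemma nearest_iff:
  assumes "x \<in> nbhd"
  shows "nearest x = p \<longleftrightarrow> p \<in> A \<and> (\<forall>q\<in>A. dist x p \<le> dist x q)"
proof -
  obtain a where "a \<in> A" "dist a x < R" using assms unfolding nbhd_def by blast
  then have u: "\<exists>!p. p \<in> A \<and> (\<forall>q\<in>A. dist x p \<le> dist x q)"
    using unique_nearest_near unfolding unique_nearest_def by blast
  show ?thesis unfolding nearest_def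
  proof
    assume "(THE p. p \<in> A \<and> (\<forall>q\<in>A. dist x p \<le> dist x q)) = p"
    then show "p \<in> A \<and> (\<forall>q\<in>A. dist x p \<le> dist x q)" using theI'[OF u] by simp
  qed (rule the1_equality[OF u])
qed

lemma nearest_in: "x \<in> nbhd \<Longrightarrow> nearest x \<in> A"
  using nearest_iff by blast

lemma nearest_le: "x \<in> nbhd \<Longrightarrow> q \<in> A \<Longrightarrow> dist x (nearest x) \<le> dist x q"
  using nearest_iff by blast

lemma nearest_eqI: "x \<in> nbhd \<Longrightarrow> p \<in> A \<Longrightarrow> (\<And>q. q \<in> A \<Longrightarrow> dist x p \<le> dist x q) \<Longrightarrow> nearest x = p"
  using nearest_iff by blast

lemma dist_nearest_less:
  assumes "x \<in> nbhd"
  shows "dist x (nearest x) < R"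
proof -
  obtain a where "a \<in> A" "dist a x < R" using assms unfolding nbhd_def by blast
  then show ?thesis using nearest_le[OF assms] by (metis dist_commute le_less_trans)
qed

lemma closed_A: "closed A"
proof -
  have "c \<in> A" if c: "c \<in> closure A" for c
  proof -
    obtain a where "a \<in> A" "dist a c < R" using c R_pos closure_approachable by blast
    then have cU: "c \<in> nbhd" by (rule nbhdI)
    have "dist c (nearest c) < e" if "e > 0" for e
    proof -
      obtain q where "q \<in> A" "dist q c < e" using c \<open>e > 0\<close> closure_approachable by blast
      then show ?thesis using nearest_le[OF cU, of q] by (simp add: dist_commute)
    qed
    then have "dist c (nearest c) = 0" by (metis dist_not_less_zero not_less_iff_gr_or_eq)
    then show ?thesis using nearest_in[OF cU] by simp
  qed
  then show ?thesis using closure_subset_eq by blast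
qed

lemma continuous_on_nearest: "continuous_on nbhd nearest"
  unfolding continuous_on_sequentially
proof (intro allI ballI impI)
  fix y :: "nat \<Rightarrow> 'a" and y0 assume y0: "y0 \<in> nbhd" and "(\<forall>n. y n \<in> nbhd) \<and> y \<longlonglongrightarrow> y0"
  then have yU: "\<And>n. y n \<in> nbhd" and ylim: "y \<longlonglongrightarrow> y0" by auto
  show "(nearest \<circ> y) \<longlonglongrightarrow> nearest y0"
  proof (rule ccontr)
    assume "\<not> (nearest \<circ> y) \<longlonglongrightarrow> nearest y0"
    then obtain e and \<phi> :: "nat \<Rightarrow> nat" where e: "e > 0" and \<phi>: "strict_mono \<phi>"
      and far: "\<And>j. e \<le> dist (nearest (y (\<phi> j))) (nearest y0)"
      by (rule not_tendsto_imp_subseq_far) auto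
    obtain B where B: "\<And>n. norm (y n) \<le> B"
      using convergent_imp_bounded[OF ylim] unfolding bounded_iff by blast
    have "norm (nearest (y n)) \<le> 2 * B + norm (nearest y0)" for n
    proof -
      have "norm (nearest (y n) - y n) \<le> norm (y n - nearest y0)"
        using nearest_le[OF yU nearest_in[OF y0]] by (simp add: dist_norm norm_minus_commute)
      also have "\<dots> \<le> norm (y n) + norm (nearest y0)" by (rule norm_triangle_ineq4)
      finally show ?thesis using B[of n] norm_triangle_sub[of "nearest (y n)" "y n"] by linarith
    qed
    then have "bounded (range (\<lambda>j. nearest (y (\<phi> j))))" unfolding bounded_iff by blast
    then obtain l \<psi> where \<psi>: "strict_mono \<psi>" and llim: "((\<lambda>j. nearest (y (\<phi> j))) \<circ> \<psi>) \<longlonglongrightarrow> l"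
      using bounded_imp_convergent_subsequence by blast
    define z where "z j = y (\<phi> (\<psi> j))" for j
    have zU: "z j \<in> nbhd" for j unfolding z_def by (rule yU)
    have zlim: "z \<longlonglongrightarrow> y0"
      using LIMSEQ_subseq_LIMSEQ[OF ylim strict_mono_o[OF \<phi> \<psi>]] unfolding z_def by (simp add: comp_def)
    have nzlim: "(\<lambda>j. nearest (z j)) \<longlonglongrightarrow> l" using llim by (simp add: z_def comp_def)
    have lA: "l \<in> A" using closed_sequentially[OF closed_A _ nzlim] nearest_in[OF zU] by blast
    have "dist y0 l \<le> dist y0 q" if q: "q \<in> A" for q
      using nearest_le[OF zU q]
      by (intro LIMSEQ_le[OF tendsto_dist[OF zlim nzlim] tendsto_dist[OF zlim tendsto_const]]) auto
    then have "nearest y0 = l" using nearest_eqI[OF y0 lA] by blast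
    moreover have "e \<le> dist l (nearest y0)"
      using far by (intro LIMSEQ_le_const[OF tendsto_dist[OF nzlim tendsto_const]]) (auto simp: z_def)
    ultimately show False using e by simp
  qed
qed

lemma nearest_segment:
  assumes x: "x \<in> nbhd" and t: "0 \<le> t" "t \<le> 1"
  shows "nearest (nearest x + t *\<^sub>R (x - nearest x)) = nearest x"
proof -
  define p where "p = nearest x"
  define y where "y = p + t *\<^sub>R (x - p)"
  have pA: "p \<in> A" using nearest_in[OF x] by (simp add: p_def)
  have dyp: "dist y p = t * norm (x - p)" using t by (simp add: y_def dist_norm)
  have "x - y = (1 - t) *\<^sub>R (x - p)" by (simp add: y_def algebra_simps)
  then have dxy: "dist x y = (1 - t) * norm (x - p)" using t by (simp add: dist_norm)
  have "dist p y \<le> norm (x - p)" using dyp t by (simp add: dist_commute mult_left_le_one_le)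
  then have "y \<in> nbhd"
    using dist_nearest_less[OF x] pA by (intro nbhdI[of p]) (auto simp: p_def dist_norm norm_minus_commute)
  moreover have "dist y p \<le> dist y q" if q: "q \<in> A" for q
  proof -
    have "norm (x - p) \<le> dist x y + dist y q"
      using nearest_le[OF x q] dist_triangle[of x q y] by (simp add: p_def dist_norm)
    then show ?thesis using dyp dxy by (simp add: algebra_simps)
  qed
  ultimately show ?thesis using nearest_eqI[OF _ pA] by (simp add: y_def p_def)
qed

text \<open>Brouwer's fixed point theorem for \<open>y \<mapsto> \<mu> *\<^sub>R x - (\<mu> - 1) *\<^sub>R nearest y\<close> on a small ball
  around \<open>p + \<mu> *\<^sub>R (x - p)\<close>: at a fixed point \<open>y\<close>, the point \<open>x\<close> lies on the segment from
  \<open>nearest y\<close> to \<open>y\<close>, so \<open>nearest y = nearest x = p\<close> and then \<open>y = p + \<mu> *\<^sub>R (x - p)\<close>.\<close>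
lemma nearest_dilation:
  assumes x: "x \<in> nbhd" "nearest x = p" and \<mu>: "1 \<le> \<mu>" and \<rho>: "0 < \<rho>" "2 * R * (\<mu> - 1) \<le> \<rho>"
    and far: "dist p (p + \<mu> *\<^sub>R (x - p)) + \<rho> < R"
  shows "nearest (p + \<mu> *\<^sub>R (x - p)) = p"
proof -
  define y0 where "y0 = p + \<mu> *\<^sub>R (x - p)"
  define G where "G y = \<mu> *\<^sub>R x - (\<mu> - 1) *\<^sub>R nearest y" for y
  define K where "K = cball y0 \<rho>"
  have pA: "p \<in> A" using nearest_in[OF x(1)] x(2) by simp
  have KU: "y \<in> nbhd" and Kd: "dist p y \<le> R" if y: "y \<in> K" for y
  proof -
    have "dist p y \<le> dist p y0 + dist y0 y" by (rule dist_triangle)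
    then have "dist p y < R" using y far by (simp add: K_def y0_def)
    then show "y \<in> nbhd" "dist p y \<le> R" using nbhdI[OF pA] by auto
  qed
  have "continuous_on K G"
    unfolding G_def using continuous_on_subset[OF continuous_on_nearest] KU
    by (intro continuous_intros) auto
  moreover have "G y \<in> K" if y: "y \<in> K" for y
  proof -
    have "y0 - G y = (\<mu> - 1) *\<^sub>R (nearest y - p)" by (simp add: G_def y0_def algebra_simps)
    then have "dist y0 (G y) = (\<mu> - 1) * norm (nearest y - p)" using \<mu> by (simp add: dist_norm)
    also have "\<dots> \<le> (\<mu> - 1) * (2 * R)"
    proof (rule mult_left_mono)
      have "norm (nearest y - p) \<le> dist y (nearest y) + dist y p"
        by (metis dist_commute dist_norm dist_triangle)
      also have "\<dots> \<le> 2 * dist p y" using nearest_le[OF KU[OF y] pA] by (simp add: dist_commute)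
      finally show "norm (nearest y - p) \<le> 2 * R" using Kd[OF y] by simp
    qed (use \<mu> in simp)
    finally show ?thesis using \<rho> by (simp add: K_def mult_ac)
  qed
  ultimately obtain y where yK: "y \<in> K" and fixed: "G y = y"
    using brouwer[of K G] \<rho> by (auto simp: K_def)
  define q where "q = nearest y"
  have yq: "y - q = \<mu> *\<^sub>R (x - q)" using fixed by (simp add: G_def q_def algebra_simps)
  then have "q + (1 / \<mu>) *\<^sub>R (y - q) = x" using \<mu> by simp
  then have "nearest x = q" using nearest_segment[OF KU[OF yK], of "1 / \<mu>"] \<mu> by (simp add: q_def)
  then have "q = p" using x(2) by simp
  then have "y = p + \<mu> *\<^sub>R (x - p)" using yq by (metis add.commute diff_add_cancel)
  then show ?thesis using \<open>q = p\<close> by (simp add: q_def)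
qed

lemma nearest_ray_step:
  assumes pA: "p \<in> A" and \<nu>: "norm \<nu> = 1" and s: "0 < s" "s < R" and ps: "nearest (p + s *\<^sub>R \<nu>) = p"
  obtains \<tau> where "s < \<tau>" "\<tau> < R" "nearest (p + \<tau> *\<^sub>R \<nu>) = p"
proof -
  define \<rho> where "\<rho> = (R - s) / 4"
  define \<tau> where "\<tau> = s + min \<rho> (s * \<rho> / (2 * R))"
  have \<rho>: "0 < \<rho>" using s by (simp add: \<rho>_def)
  have \<tau>: "s < \<tau>" "\<tau> \<le> s + \<rho>" "\<tau> - s \<le> s * \<rho> / (2 * R)" using \<rho> s R_pos by (auto simp: \<tau>_def)
  have x: "p + s *\<^sub>R \<nu> \<in> nbhd" using s \<nu> by (intro nbhdI[OF pA]) (simp add: dist_norm)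
  have "2 * R * (\<tau> / s - 1) = 2 * R * (\<tau> - s) / s" using s by (simp add: field_simps)
  also have "\<dots> \<le> 2 * R * (s * \<rho> / (2 * R)) / s"
    using \<tau>(3) s R_pos by (intro divide_right_mono mult_left_mono) auto
  also have "\<dots> = \<rho>" using s R_pos by simp
  finally have "2 * R * (\<tau> / s - 1) \<le> \<rho>" .
  moreover have "dist p (p + (\<tau> / s) *\<^sub>R ((p + s *\<^sub>R \<nu>) - p)) = \<tau>"
    using \<tau>(1) s \<nu> by (simp add: dist_norm)
  moreover have \<tau>R: "\<tau> + \<rho> < R" using \<tau>(2)[unfolded \<rho>_def] s by (simp add: \<rho>_def field_simps)
  ultimately have "nearest (p + (\<tau> / s) *\<^sub>R ((p + s *\<^sub>R \<nu>) - p)) = p"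
    using \<tau>(1) s \<rho> by (intro nearest_dilation[OF x ps]) auto
  then have "nearest (p + \<tau> *\<^sub>R \<nu>) = p" using s by simp
  moreover have "\<tau> < R" using \<tau>R \<rho> by linarith
  ultimately show ?thesis using that \<tau>(1) by blast
qed

text \<open>The parameters \<open>t \<in> {0..<R}\<close> with \<open>nearest (p + t *\<^sub>R \<nu>) = p\<close> form an initial segment that is
  relatively closed and, by \<open>nearest_ray_step\<close>, has no largest element below \<open>R\<close>.\<close>
lemma nearest_ray_extend:
  assumes pA: "p \<in> A" and \<nu>: "norm \<nu> = 1" and s0: "0 < s0" "s0 < R"
    and ps0: "nearest (p + s0 *\<^sub>R \<nu>) = p" and s: "0 \<le> s" "s < R"
  shows "nearest (p + s *\<^sub>R \<nu>) = p"
proof (rule ccontr)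
  define S where "S = {t \<in> {0..<R}. nearest (p + t *\<^sub>R \<nu>) = p}"
  have inU: "p + t *\<^sub>R \<nu> \<in> nbhd" if "0 \<le> t" "t < R" for t
    using that \<nu> by (intro nbhdI[OF pA]) (simp add: dist_norm)
  have down: "t \<in> S" if t': "t' \<in> S" and t: "0 \<le> t" "t \<le> t'" for t t'
  proof (cases "t' = 0")
    case True then show ?thesis using t t' by (simp add: S_def)
  next
    case False
    then have "0 < t'" using t by simp
    then have "nearest (p + (t / t') *\<^sub>R ((p + t' *\<^sub>R \<nu>) - p)) = p"
      using nearest_segment[OF inU, of t' "t / t'"] t t' by (auto simp: S_def)
    then show ?thesis using t t' \<open>0 < t'\<close> by (simp add: S_def)
  qed
  assume "nearest (p + s *\<^sub>R \<nu>) \<noteq> p"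
  then have below: "t < s" if "t \<in> S" for t using down[OF that s(1)] s by (force simp: S_def)
  have s0S: "s0 \<in> S" using s0 ps0 by (simp add: S_def)
  have bdd: "bdd_above S" using below by (meson bdd_aboveI less_imp_le)
  define \<sigma> where "\<sigma> = Sup S"
  have \<sigma>: "s0 \<le> \<sigma>" "\<sigma> \<le> s" unfolding \<sigma>_def
    using s0S bdd below by (auto intro: cSup_upper cSup_least less_imp_le)
  have "continuous_on {0..<R} (\<lambda>t. nearest (p + t *\<^sub>R \<nu>))"
    by (rule continuous_on_compose2[OF continuous_on_nearest]) (auto intro!: continuous_intros inU)
  then have "closedin (top_of_set {0..<R}) S"
    unfolding S_def by (rule continuous_closedin_preimage_constant)
  then obtain T where T: "closed T" "S = {0..<R} \<inter> T" by (auto simp: closedin_closed)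
  have "\<sigma> \<in> closure S" unfolding \<sigma>_def using s0S bdd by (auto intro: closure_contains_Sup)
  moreover have "closure S \<subseteq> T" using T by (intro closure_minimal) auto
  ultimately have "\<sigma> \<in> T" by blast
  then have "\<sigma> \<in> S" using T \<sigma> s0 s by auto
  then have \<sigma>S: "\<sigma> < R" "nearest (p + \<sigma> *\<^sub>R \<nu>) = p" by (auto simp: S_def)
  have "0 < \<sigma>" using \<sigma> s0 by simp
  then obtain \<tau> where "\<sigma> < \<tau>" "\<tau> < R" "nearest (p + \<tau> *\<^sub>R \<nu>) = p"
    using nearest_ray_step[OF pA \<nu> _ \<sigma>S] by blast
  then have "\<tau> \<in> S" using \<sigma> s0 by (simp add: S_def)
  then show False using cSup_upper[OF _ bdd] \<open>\<sigma> < \<tau>\<close> by (force simp: \<sigma>_def)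
qed

lemma nearest_normal_inequality:
  assumes x: "x \<in> nbhd" and r: "0 < r" "r < R" and w: "w \<in> A"
  shows "inner (w - nearest x) (x - nearest x) \<le> (norm (w - nearest x))\<^sup>2 * norm (x - nearest x) / (2 * r)"
proof (cases "x = nearest x")
  case True then show ?thesis by simp
next
  case False
  define p where "p = nearest x"
  define \<nu> where "\<nu> = sgn (x - p)"
  have pA: "p \<in> A" using nearest_in[OF x] by (simp add: p_def)
  have \<nu>: "norm \<nu> = 1" using False by (simp add: \<nu>_def p_def norm_sgn)
  have d: "0 < norm (x - p)" "norm (x - p) < R"
    using False dist_nearest_less[OF x] by (auto simp: p_def dist_norm)
  have x\<nu>: "x - p = norm (x - p) *\<^sub>R \<nu>" using d by (simp add: \<nu>_def sgn_div_norm)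
  then have "nearest (p + norm (x - p) *\<^sub>R \<nu>) = p" by (simp add: p_def)
  then have "nearest (p + r *\<^sub>R \<nu>) = p" using nearest_ray_extend[OF pA \<nu> d] r by simp
  moreover have "p + r *\<^sub>R \<nu> \<in> nbhd" using r \<nu> by (intro nbhdI[OF pA]) (simp add: dist_norm)
  ultimately have "dist (p + r *\<^sub>R \<nu>) p \<le> dist (p + r *\<^sub>R \<nu>) w" using nearest_le[OF _ w] by metis
  then have "norm (r *\<^sub>R \<nu>) \<le> norm (r *\<^sub>R \<nu> - (w - p))"
    by (simp add: dist_norm diff_diff_eq2 add.commute)
  then have "(norm (r *\<^sub>R \<nu>))\<^sup>2 \<le> (norm (r *\<^sub>R \<nu> - (w - p)))\<^sup>2"
    by (rule power_mono) simp
  then have "2 * r * inner (w - p) \<nu> \<le> (norm (w - p))\<^sup>2"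
    unfolding power2_norm_diff by (simp add: inner_commute)
  then have "norm (x - p) * inner (w - p) \<nu> \<le> norm (x - p) * ((norm (w - p))\<^sup>2 / (2 * r))"
    using d r by (intro mult_left_mono) (auto simp: field_simps)
  moreover have "inner (w - p) (x - p) = norm (x - p) * inner (w - p) \<nu>"
    by (subst x\<nu>) simp
  ultimately show ?thesis by (simp add: p_def mult.commute)
qed

lemma nearest_of_offset:
  assumes aA: "a \<in> A" and s: "0 < s" "s * norm n < R"
  defines "q \<equiv> nearest (a + s *\<^sub>R n)"
  shows "q \<in> A" and "(norm (q - a))\<^sup>2 \<le> 2 * s * inner n (q - a)"
    and "\<And>w r. w \<in> A \<Longrightarrow> 0 < r \<Longrightarrow> r < R \<Longrightarrow> inner (w - q) (n - (1 / s) *\<^sub>R (q - a))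
        \<le> (norm (w - q))\<^sup>2 * norm (n - (1 / s) *\<^sub>R (q - a)) / (2 * r)"
proof -
  have x: "a + s *\<^sub>R n \<in> nbhd" using s by (intro nbhdI[OF aA]) (simp add: dist_norm)
  show "q \<in> A" using nearest_in[OF x] by (simp add: q_def)
  have "norm (s *\<^sub>R n - (q - a)) \<le> s * norm n"
    using nearest_le[OF x aA] s by (simp add: q_def dist_norm algebra_simps)
  then have "(norm (s *\<^sub>R n - (q - a)))\<^sup>2 \<le> (s * norm n)\<^sup>2" by (simp add: power_mono)
  then show "(norm (q - a))\<^sup>2 \<le> 2 * s * inner n (q - a)"
    unfolding power2_norm_diff by (simp add: power_mult_distrib)
  fix w r assume w: "w \<in> A" and r: "0 < r" "r < R"
  have "a + s *\<^sub>R n - q = s *\<^sub>R (n - (1 / s) *\<^sub>R (q - a))" using s by (simp add: algebra_simps)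
  then have "s * inner (w - q) (n - (1 / s) *\<^sub>R (q - a))
      \<le> s * ((norm (w - q))\<^sup>2 * norm (n - (1 / s) *\<^sub>R (q - a)) / (2 * r))"
    using nearest_normal_inequality[OF x r w] s by (simp add: q_def mult_ac)
  then show "inner (w - q) (n - (1 / s) *\<^sub>R (q - a))
      \<le> (norm (w - q))\<^sup>2 * norm (n - (1 / s) *\<^sub>R (q - a)) / (2 * r)"
    using s(1) by (rule mult_left_le_imp_le)
qed

text \<open>Federer's inequality for normal vectors: apply \<open>nearest_of_offset\<close> with \<open>s \<rightarrow> 0\<close>; the
  rescaled displacements \<open>(q - a) /\<^sub>R s\<close> vanish in the limit because \<open>n\<close> is in the dual cone.\<close>
lemma Tan_dual_inequality:
  assumes aA: "a \<in> A" and dual: "\<And>t. t \<in> Tan A a \<Longrightarrow> inner n t \<le> 0"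
    and r: "0 < r" "r < R" and w: "w \<in> A"
  shows "inner (w - a) n \<le> (norm (w - a))\<^sup>2 * norm n / (2 * r)"
proof -
  define c where "c = R / (norm n + 1)"
  have c: "0 < c" "c * norm n < R" using R_pos by (auto simp: c_def field_simps add_pos_nonneg)
  define s where "s j = c * inverse (real (Suc j))" for j
  have s: "0 < s j" "s j * norm n < R" for j
  proof -
    show "0 < s j" using c by (simp add: s_def)
    have "s j * norm n \<le> c * norm n" using c by (intro mult_right_mono) (auto simp: s_def field_simps)
    then show "s j * norm n < R" using c by simp
  qed
  have slim: "s \<longlonglongrightarrow> 0"
    unfolding s_def by (rule tendsto_mult_right_zero[OF LIMSEQ_inverse_real_of_nat])
  define q where "q j = nearest (a + s j *\<^sub>R n)" for j
  define d where "d j = (1 / s j) *\<^sub>R (q j - a)" for j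
  note offset = nearest_of_offset[OF aA s, folded q_def]
  have dlim: "d \<longlonglongrightarrow> 0"
    unfolding d_def by (rule dual_Tan_displacements_vanish[OF dual offset(1) s(1) slim offset(2)])
  have "q = (\<lambda>j. a + s j *\<^sub>R d j)" using s(1) by (simp add: fun_eq_iff d_def less_imp_neq[symmetric])
  then have qlim: "q \<longlonglongrightarrow> a"
    using tendsto_add[OF tendsto_const tendsto_scaleR[OF slim dlim], of a] by simp
  have "inner (w - q j) (n - d j) \<le> (norm (w - q j))\<^sup>2 * norm (n - d j) / (2 * r)" for j
    using offset(3)[OF w r] by (simp add: d_def)
  moreover have "(\<lambda>j. inner (w - q j) (n - d j)) \<longlonglongrightarrow> inner (w - a) (n - 0)"
    by (intro tendsto_intros qlim dlim)
  moreover have "(\<lambda>j. (norm (w - q j))\<^sup>2 * norm (n - d j) / (2 * r))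
      \<longlonglongrightarrow> (norm (w - a))\<^sup>2 * norm (n - 0) / (2 * r)"
    by (intro tendsto_intros qlim dlim) (use r in auto)
  ultimately show ?thesis using LIMSEQ_le by fastforce
qed

lemma normal_inner_bound:
  assumes "a \<in> A" and "\<And>t. t \<in> Tan A a \<Longrightarrow> inner n t = 0" and "0 < r" "r < R" and "w \<in> A"
  shows "\<bar>inner (w - a) n\<bar> \<le> (norm (w - a))\<^sup>2 * norm n / (2 * r)"
  using Tan_dual_inequality[of a n r w] Tan_dual_inequality[of a "- n" r w] assms
  by (simp add: abs_le_iff)

end

lemma reach_gt_imp_positive_reach:
  fixes A :: "'a::euclidean_space set"
  assumes r: "0 \<le> r" and reach: "ereal r < reach A"
  obtains R where "r < R" "positive_reach A R"
proof -
  obtain R where rR: "r < R" and R: "ereal R < reach A"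
    using ereal_dense2[OF reach] by auto
  have "unique_nearest A x" if a: "a \<in> A" and d: "dist a x < R" for a x
  proof -
    have "ereal R < Sup {ereal s | s. s \<ge> 0 \<and> (\<forall>x\<in>ball a s. unique_nearest A x)}"
      using less_INF_D[OF R[unfolded reach_def] a] .
    then obtain s where "R < s" "\<forall>x\<in>ball a s. unique_nearest A x"
      by (auto simp: less_Sup_iff)
    then show ?thesis using d by auto
  qed
  then show ?thesis using that rR r by (simp add: positive_reach_def)
qed

section \<open>Simplices of large fullness\<close>

definition edges :: "(nat \<Rightarrow> 'a::real_vector) \<Rightarrow> nat \<Rightarrow> 'a" where
  "edges Q = (\<lambda>i. Q (Suc i) - Q 0)"

lemma simplex_vol_eq_gram_det: "simplex_vol k Q = sqrt (gram_det k (edges Q)) / fact k"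
  unfolding simplex_vol_def edges_def detk_inner_eq_gram_det[symmetric] by simp

lemma norm_vertex_diff_le_diameter:
  assumes "i \<le> k" "j \<le> k"
  shows "norm (Q i - Q j) \<le> diameter (simplex_set k Q)"
proof -
  have "bounded (simplex_set k Q)"
    unfolding simplex_set_def by (intro finite_imp_bounded_convex_hull) auto
  moreover have "Q l \<in> simplex_set k Q" if "l \<le> k" for l
    unfolding simplex_set_def using that by (intro hull_inc) auto
  ultimately show ?thesis using diameter_bounded_bound assms by (metis dist_norm)
qed

lemma norm_edges_le_diameter: "j < k \<Longrightarrow> norm (edges Q j) \<le> diameter (simplex_set k Q)"
  unfolding edges_def by (intro norm_vertex_diff_le_diameter) auto

text \<open>A degenerate simplex has fullness \<open>0\<close>, since division by zero yields \<open>0\<close>.\<close>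
lemma diameter_pos_of_fullness:
  assumes k: "0 < k" and \<theta>: "0 < \<theta>" "\<theta> \<le> fullness k Q"
  shows "0 < diameter (simplex_set k Q)"
proof (rule ccontr)
  assume "\<not> 0 < diameter (simplex_set k Q)"
  moreover have "0 \<le> diameter (simplex_set k Q)"
    using norm_vertex_diff_le_diameter[of 0 k 0 Q] by simp
  ultimately have "fullness k Q = 0" using k by (simp add: fullness_def)
  then show False using \<theta> by simp
qed

lemma gram_det_edges_ge_of_fullness:
  assumes k: "0 < k" and \<theta>: "0 < \<theta>" "\<theta> \<le> fullness k Q"
  shows "(fact k * \<theta> * diameter (simplex_set k Q) ^ k)\<^sup>2 \<le> gram_det k (edges Q)"
proof -
  define D where "D = diameter (simplex_set k Q)"
  have D: "0 < D" unfolding D_def by (rule diameter_pos_of_fullness[OF assms])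
  have "\<theta> * D ^ k \<le> simplex_vol k Q" using \<theta>(2) D by (simp add: fullness_def D_def field_simps)
  then have "fact k * \<theta> * D ^ k \<le> sqrt (gram_det k (edges Q))"
    by (simp add: simplex_vol_eq_gram_det field_simps)
  then have "(fact k * \<theta> * D ^ k)\<^sup>2 \<le> (sqrt (gram_det k (edges Q)))\<^sup>2"
    using \<theta> D by (intro power_mono) auto
  then show ?thesis using gram_det_nonneg[of k "edges Q"] by (simp add: D_def)
qed

lemma height_edges_ge_of_fullness:
  assumes \<theta>: "0 < \<theta>" "\<theta> \<le> fullness k Q" and j: "j < k"
  shows "fact k * \<theta> * diameter (simplex_set k Q) \<le> height k (edges Q) j"
proof -
  have k: "0 < k" using j by simp
  show ?thesis
    using \<theta> by (intro height_ge_of_gram_det_ge norm_edges_le_diameter diameter_pos_of_fullness[OF k]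
        gram_det_edges_ge_of_fullness[OF k] j) auto
qed

lemma dim_span_edges_of_fullness:
  assumes "0 < \<theta>" "\<theta> \<le> fullness k Q"
  shows "dim (span (edges Q ` {..<k})) = k"
proof (rule dim_span_of_positive_heights)
  fix j assume j: "j < k"
  have "0 < fact k * \<theta> * diameter (simplex_set k Q)"
    using assms j diameter_pos_of_fullness[of k \<theta> Q] by simp
  then show "0 < height k (edges Q) j"
    using height_edges_ge_of_fullness[OF assms j] by linarith
qed

lemma edge_length_ge_of_fullness:
  assumes "0 < \<theta>" "\<theta> \<le> fullness k Q" "j < k"
  shows "fact k * \<theta> * diameter (simplex_set k Q) \<le> norm (Q (Suc j) - Q 0)"
  using height_edges_ge_of_fullness[OF assms] height_le_norm[of k "edges Q" j]
  by (simp add: edges_def)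

lemma simplex_set_swap01:
  assumes "0 < k"
  shows "simplex_set k (Q \<circ> Transposition.transpose 0 1) = simplex_set k Q"
proof -
  have "Transposition.transpose 0 1 ` {..k} = {..k}"
    using assms by (intro permutes_image permutes_swap_id) auto
  then show ?thesis unfolding simplex_set_def by (metis image_comp)
qed

lemma gram_det_edges_swap01:
  "gram_det k (edges (Q \<circ> Transposition.transpose 0 1)) = gram_det k (edges Q)"
proof -
  define M where "M = Matrix.mat k k (\<lambda>(i, j). if j = 0 then -1 else if i = j then (1::real) else 0)"
  have M: "M \<in> carrier_mat k k" by (simp add: M_def)
  have "edges (Q \<circ> Transposition.transpose 0 1) i = (\<Sum>j<k. (M $$ (i, j)) *\<^sub>R edges Q j)"
    if i: "i < k" for i
  proof -
    have "(\<Sum>j<k. (M $$ (i, j)) *\<^sub>R edges Q j)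
        = (\<Sum>j<k. (if j = 0 then - edges Q 0 else 0) + (if j = i \<and> i \<noteq> 0 then edges Q j else 0))"
      using i by (intro sum.cong) (auto simp: M_def)
    also have "\<dots> = - edges Q 0 + (if i = 0 then 0 else edges Q i)"
      using i by (simp add: sum.distrib)
    finally show ?thesis by (auto simp: edges_def Transposition.transpose_def)
  qed
  note change = gram_det_linear_change[OF M this]
  have "Determinant.det M = prod_list (diag_mat M)"
    by (rule det_lower_triangular[OF _ M]) (auto simp: M_def)
  also have "\<dots> = (\<Prod>i<k. M $$ (i, i))"
    by (simp add: prod_list_diag_prod M_def atLeast0LessThan)
  finally have "(Determinant.det M)\<^sup>2 = (\<Prod>i<k. (M $$ (i, i))\<^sup>2)"
    by (simp add: prod_power_distrib)
  also have "\<dots> = 1" by (intro prod.neutral) (auto simp: M_def)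
  finally have "(Determinant.det M)\<^sup>2 = 1" .
  then show ?thesis using change by simp
qed

lemma fullness_swap01:
  assumes "0 < k"
  shows "fullness k (Q \<circ> Transposition.transpose 0 1) = fullness k Q"
  unfolding fullness_def simplex_vol_eq_gram_det gram_det_edges_swap01 simplex_set_swap01[OF assms] ..

lemma span_edges_subset_swap01:
  "span (edges Q ` {..<k}) \<subseteq> span (edges (Q \<circ> Transposition.transpose 0 1) ` {..<k})"
proof (rule span_minimal)
  let ?E' = "span (edges (Q \<circ> Transposition.transpose 0 1) ` {..<k})"
  show "edges Q ` {..<k} \<subseteq> ?E'"
  proof
    fix x assume "x \<in> edges Q ` {..<k}"
    then obtain i where i: "i < k" and x: "x = edges Q i" by blast
    have e0: "edges (Q \<circ> Transposition.transpose 0 1) 0 \<in> ?E'" using i by (intro span_base) auto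
    have ei: "edges (Q \<circ> Transposition.transpose 0 1) i \<in> ?E'" using i by (intro span_base) auto
    show "x \<in> ?E'"
    proof (cases "i = 0")
      case True
      then have "x = - edges (Q \<circ> Transposition.transpose 0 1) 0"
        using x by (simp add: edges_def Transposition.transpose_def)
      then show ?thesis using e0 by (simp add: span_neg)
    next
      case False
      then have "x = edges (Q \<circ> Transposition.transpose 0 1) i - edges (Q \<circ> Transposition.transpose 0 1) 0"
        using x by (simp add: edges_def Transposition.transpose_def)
      then show ?thesis using e0 ei by (simp add: span_diff)
    qed
  qed
qed simp

lemma verts_in:
  assumes "a \<in> A" "b \<in> A" "\<forall>i\<in>{1..k - 1}. z i \<in> A" "i \<le> k"
  shows "verts a b z i \<in> A"
proof (cases "i \<le> 1")
  case True then show ?thesis using assms by (auto simp: verts_def le_Suc_eq)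
next
  case False
  then have "i - 1 \<in> {1..k - 1}" using assms(4) by auto
  then show ?thesis using assms(3) False by (auto simp: verts_def)
qed

context positive_reach
begin

lemma inner_edges_normal_bound:
  assumes QA: "\<And>i. i \<le> k \<Longrightarrow> Q i \<in> A" and n: "\<And>t. t \<in> Tan A (Q 0) \<Longrightarrow> inner n t = 0"
    and r: "0 < r" "r < R" and l: "l < k"
  shows "\<bar>inner (edges Q l) n\<bar> \<le> (diameter (simplex_set k Q))\<^sup>2 * norm n / (2 * r)"
proof -
  have "\<bar>inner (edges Q l) n\<bar> \<le> (norm (edges Q l))\<^sup>2 * norm n / (2 * r)"
    using normal_inner_bound[OF QA[of 0] n r QA[of "Suc l"]] l by (simp add: edges_def)
  also have "\<dots> \<le> (diameter (simplex_set k Q))\<^sup>2 * norm n / (2 * r)"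
    using norm_edges_le_diameter[OF l] r
    by (intro divide_right_mono mult_right_mono power_mono) auto
  finally show ?thesis .
qed

lemma span_edges_near_Tan_span:
  assumes QA: "\<And>i. i \<le> k \<Longrightarrow> Q i \<in> A" and k: "0 < k" and \<theta>: "0 < \<theta>" "\<theta> \<le> fullness k Q"
    and r: "0 < r" "r < R"
  shows "near (real k * diameter (simplex_set k Q) / (2 * r * fact k * \<theta>))
      (span (edges Q ` {..<k})) (Tan_span A (Q 0))"
  unfolding near_def
proof
  fix p assume p: "p \<in> span (edges Q ` {..<k})"
  define D where "D = diameter (simplex_set k Q)"
  define T where "T = Tan_span A (Q 0)"
  have D: "0 < D" unfolding D_def by (rule diameter_pos_of_fullness[OF k \<theta>])
  obtain \<pi> where "linear \<pi>" and \<pi>T: "\<And>x. \<pi> x \<in> T" and orth: "\<And>x w. w \<in> T \<Longrightarrow> inner (x - \<pi> x) w = 0"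
    using subspace_orthogonal_projection_exists[of T] unfolding T_def Tan_span_def by blast
  define z where "z = p - \<pi> p"
  have "infdist p T = norm z"
    unfolding z_def by (rule infdist_subspace_eq_norm[OF _ \<pi>T orth]) (simp add: T_def Tan_span_def)
  also have "norm z \<le> real k * (D\<^sup>2 / (2 * r)) / (fact k * \<theta> * D) * norm p"
  proof (rule norm_le_of_inner_span_bound[OF p])
    show "inner p z = (norm z)\<^sup>2"
      using orth[OF \<pi>T[of p], of p] by (simp add: z_def power2_norm_eq_inner inner_diff_left inner_commute)
    show "0 < fact k * \<theta> * D" using D \<theta> by simp
    show "fact k * \<theta> * D \<le> height k (edges Q) l" if "l < k" for l
      unfolding D_def by (rule height_edges_ge_of_fullness[OF \<theta> that])
    show "0 \<le> D\<^sup>2 / (2 * r)" using r by simp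
    have z_normal: "inner z t = 0" if "t \<in> Tan A (Q 0)" for t
      using orth[of t p] that by (simp add: z_def T_def Tan_span_def span_base)
    show "\<bar>inner (edges Q l) z\<bar> \<le> D\<^sup>2 / (2 * r) * norm z" if "l < k" for l
      using inner_edges_normal_bound[OF QA z_normal r that] by (simp add: D_def)
  qed
  also have "real k * (D\<^sup>2 / (2 * r)) / (fact k * \<theta> * D) = real k * D / (2 * r * fact k * \<theta>)"
    using D by (simp add: power2_eq_square field_simps)
  finally show "infdist p (Tan_span A (Q 0))
      \<le> real k * diameter (simplex_set k Q) / (2 * r * fact k * \<theta>) * norm p"
    by (simp add: T_def D_def)
qed

lemma span_edges_near_Tan_span_vertex_1:
  assumes QA: "\<And>i. i \<le> k \<Longrightarrow> Q i \<in> A" and k: "0 < k" and \<theta>: "0 < \<theta>" "\<theta> \<le> fullness k Q"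
    and r: "0 < r" "r < R"
  shows "near (real k * diameter (simplex_set k Q) / (2 * r * fact k * \<theta>))
      (span (edges Q ` {..<k})) (Tan_span A (Q 1))"
proof -
  define Q' where "Q' = Q \<circ> Transposition.transpose 0 1"
  have "Q' i \<in> A" if "i \<le> k" for i
    using that k by (auto simp: Q'_def Transposition.transpose_def intro!: QA)
  moreover have "\<theta> \<le> fullness k Q'" unfolding Q'_def fullness_swap01[OF k] by (rule \<theta>(2))
  ultimately have "near (real k * diameter (simplex_set k Q') / (2 * r * fact k * \<theta>))
      (span (edges Q' ` {..<k})) (Tan_span A (Q' 0))"
    by (rule span_edges_near_Tan_span[OF _ k \<theta>(1) _ r])
  moreover have "diameter (simplex_set k Q') = diameter (simplex_set k Q)"
    unfolding Q'_def simplex_set_swap01[OF k] ..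
  moreover have "Q' 0 = Q 1" by (simp add: Q'_def)
  moreover have "span (edges Q ` {..<k}) \<subseteq> span (edges Q' ` {..<k})"
    unfolding Q'_def by (rule span_edges_subset_swap01)
  ultimately show ?thesis by (metis near_antimono order_refl)
qed

lemma rho_Tan_span_vertices_le:
  assumes QA: "\<And>i. i \<le> k \<Longrightarrow> Q i \<in> A" and k: "0 < k" and \<theta>: "0 < \<theta>" "\<theta> \<le> fullness k Q"
    and r: "0 < r" "r < R" and dims: "dim (Tan_span A (Q 0)) = k" "dim (Tan_span A (Q 1)) = k"
  shows "rho (Tan_span A (Q 0)) (Tan_span A (Q 1)) \<le> real k * diameter (simplex_set k Q) / (r * fact k * \<theta>)"
proof -
  have "rho (Tan_span A (Q 0)) (Tan_span A (Q 1))
      \<le> 2 * (real k * diameter (simplex_set k Q) / (2 * r * fact k * \<theta>))"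
  proof (rule rho_le_via_common_subspace[OF _ _ _ dims _ k])
    show "subspace (Tan_span A (Q 0))" "subspace (Tan_span A (Q 1))" "subspace (span (edges Q ` {..<k}))"
      by (simp_all add: Tan_span_def)
    show "dim (span (edges Q ` {..<k})) = k" by (rule dim_span_edges_of_fullness[OF \<theta>])
    show "0 \<le> real k * diameter (simplex_set k Q) / (2 * r * fact k * \<theta>)"
      using diameter_pos_of_fullness[OF k \<theta>] r \<theta> by simp
  qed (use span_edges_near_Tan_span[OF QA k \<theta> r] span_edges_near_Tan_span_vertex_1[OF QA k \<theta> r] in auto)
  then show ?thesis by simp
qed

end

theorem lemma3p8:
  fixes A :: "'a::euclidean_space set" and k :: nat and r \<theta> :: real and a b :: 'a
  assumes "2 \<le> k" and "k < DIM('a)"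
    and "0 < r" and "ereal r < reach A"
    and "\<theta> > 0"
    and "a \<in> T_k k A" and "b \<in> T_k k A"
    and "related A k \<theta> a b"
  shows "rho (psi k A a) (psi k A b) \<le> (real k / ((fact k * \<theta>)\<^sup>2 * r)) * norm (b - a)"
proof -
  obtain z where zA: "\<forall>i\<in>{1..k - 1}. z i \<in> A" and full: "\<theta> \<le> fullness k (verts a b z)"
    using assms(8) unfolding related_def by blast
  have aA: "a \<in> A" and bA: "b \<in> A" and dims: "dim (Tan_span A a) = k" "dim (Tan_span A b) = k"
    using assms(6,7) by (auto simp: T_k_def)
  obtain R where "r < R" and "positive_reach A R"
    using reach_gt_imp_positive_reach assms(3,4) less_imp_le by blast
  then interpret positive_reach A R by simp
  define Q where "Q = verts a b z"
  define D where "D = diameter (simplex_set k Q)"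
  have k: "0 < k" using assms(1) by simp
  have QA: "\<And>i. i \<le> k \<Longrightarrow> Q i \<in> A" using verts_in[OF aA bA zA] by (simp add: Q_def)
  have fullQ: "\<theta> \<le> fullness k Q" using full by (simp add: Q_def)
  have Q01: "Q 0 = a" "Q 1 = b" by (simp_all add: Q_def verts_def)
  have "rho (psi k A a) (psi k A b) \<le> real k * D / (r * fact k * \<theta>)"
    using rho_Tan_span_vertices_le[OF QA k assms(5) fullQ assms(3) \<open>r < R\<close>] dims
    unfolding psi_def D_def Q01 by blast
  also have "\<dots> = real k / ((fact k * \<theta>)\<^sup>2 * r) * (fact k * \<theta> * D)"
    using assms(5) by (simp add: power2_eq_square field_simps)
  also have "\<dots> \<le> real k / ((fact k * \<theta>)\<^sup>2 * r) * norm (b - a)"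
    using edge_length_ge_of_fullness[OF assms(5) fullQ k] assms(3)
    by (intro mult_left_mono) (simp_all add: D_def Q01(1) Q01(2)[unfolded One_nat_def])
  finally show ?thesis .
qed

end
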